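(* Consider Configuration II (two agents in mutual beacon-referenced pursuit of a single beacon at the origin, $b=0$) with parameters $\mu>0$, $\lambda\in(0,1)$, $a\in[-1,1]$ and $a_0\in[-1,1]\setminus\{0\}$. (a) If $(1-\lambda)a+\lambda a_0<0$, a circling equilibrium exists with $$\bar x_1=\bar x_2=0,\ \bar x_{1b1}=\bar x_{2b2}=0,\ \tilde x=-1,\ \rho_{1b1}=\rho_{2b2}=\frac{1}{-\mu\bigl((1-\lambda)a+\lambda a_0\bigr)},\ \rho=2\rho_{1b1}.$$ (b) If $(1-\lambda)a+\lambda a_0<0$, $a_0<0$ and $a>0$, a circling equilibrium exists with $$\bar x_1=\bar x_2=0,\ \bar x_{1b1}=\bar x_{2b2}=0,\ \tilde x=1,\ \rho_{1b1}=\rho_{2b2}=\frac{\lambda a_0}{\mu\bigl((1-\lambda)^2a^2-\lambda^2a_0^2\bigr)},\ \rho=\frac{-2(1-\lambda)a}{\mu\bigl((1-\lambda)^2a^2-\lambda^2a_0^2\bigr)}.$$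
   Context: Two-agent setup: beacons $\mathbf r_{b1}=(0,0,-b)$, $\mathbf r_{b2}=(0,0,b)$ with $b\ge0$, $\hat{\mathbf b}=\mathbf r_{b2}-\mathbf r_{b1}=(0,0,2b)$. Agents $i=1,2$ have positions $\mathbf r_i\in\mathbb R^3$ and unit velocities $\mathbf x_i$. Let $\mathbf r=\mathbf r_1-\mathbf r_2$, $\mathbf r_{1b1}=\mathbf r_1-\mathbf r_{b1}$, $\mathbf r_{2b2}=\mathbf r_2-\mathbf r_{b2}$, $\rho=|\mathbf r|$, $\rho_{1b1}=|\mathbf r_{1b1}|$, $\rho_{2b2}=|\mathbf r_{2b2}|$, $\bar x_1=\mathbf x_1\cdot\mathbf r/\rho$, $\bar x_2=-\mathbf x_2\cdot\mathbf r/\rho$, $\bar x_{1b1}=\mathbf x_1\cdot\mathbf r_{1b1}/\rho_{1b1}$, $\bar x_{2b2}=\mathbf x_2\cdot\mathbf r_{2b2}/\rho_{2b2}$, $\tilde x=\mathbf x_1\cdot\mathbf x_2$, $\hat r_i=\mathbf r_i\cdot\hat{\mathbf b}$, $\hat x_i=\mathbf x_i\cdot\hat{\mathbf b}$. With gain $\mu>0$, weight $\lambda\in(0,1)$, common agent-bearing parameter $a\in[-1,1]$ and common beacon-bearing parameter $a_0\in[-1,1]$, the closed-loop dynamics are $\dot{\mathbf r}_i=\mathbf x_i$ and $$\dot{\mathbf x}_1=-(1-\lambda)\mu(\bar x_1-a)\Bigl(\tfrac{\mathbf r}{\rho}-\bar x_1\mathbf x_1\Bigr)-\lambda\mu(\bar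 x_{1b1}-a_0)\Bigl(\tfrac{\mathbf r_{1b1}}{\rho_{1b1}}-\bar x_{1b1}\mathbf x_1\Bigr),$$ $$\dot{\mathbf x}_2=-(1-\lambda)\mu(\bar x_2-a)\Bigl(-\tfrac{\mathbf r}{\rho}-\bar x_2\mathbf x_2\Bigr)-\lambda\mu(\bar x_{2b2}-a_0)\Bigl(\tfrac{\mathbf r_{2b2}}{\rho_{2b2}}-\bar x_{2b2}\mathbf x_2\Bigr).$$ The shape variables $(\bar x_1,\bar x_2,\bar x_{1b1},\bar x_{2b2},\tilde x,\rho,\rho_{1b1},\rho_{2b2},\hat r_1,\hat r_2,\hat x_1,\hat x_2)$ have time derivatives along this flow that depend only on the shape variables. A circling equilibrium is a state with $\rho,\rho_{1b1},\rho_{2b2}>0$ at which the time derivatives of all shape variables vanish. Configuration II is the case $b=0$ (single beacon at the origin, so $\hat{\mathbf b}=\mathbf 0$ and $\hat r_i=\hat x_i=0$). *)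

theory Defs
  imports "HOL-Analysis.Analysis"
begin

text \<open>Two-agent beacon-referenced pursuit. State: positions r1 r2 and unit
velocities x1 x2 in R^3; beacon half-separation b.\<close>

definition rb1 :: "real \<Rightarrow> real^3" where "rb1 b = vector [0, 0, -b]"
definition rb2 :: "real \<Rightarrow> real^3" where "rb2 b = vector [0, 0, b]"
definition bhat :: "real \<Rightarrow> real^3" where "bhat b = rb2 b - rb1 b"

definition rho :: "real^3 \<Rightarrow> real^3 \<Rightarrow> real" where
  "rho r1 r2 = norm (r1 - r2)"
definition rho1b1 :: "real \<Rightarrow> real^3 \<Rightarrow> real" where
  "rho1b1 b r1 = norm (r1 - rb1 b)"
definition rho2b2 :: "real \<Rightarrow> real^3 \<Rightarrow> real" where
  "rho2b2 b r2 = norm (r2 - rb2 b)"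

definition xbar1 :: "real^3 \<Rightarrow> real^3 \<Rightarrow> real^3 \<Rightarrow> real" where
  "xbar1 r1 r2 x1 = (x1 \<bullet> (r1 - r2)) / rho r1 r2"
definition xbar2 :: "real^3 \<Rightarrow> real^3 \<Rightarrow> real^3 \<Rightarrow> real" where
  "xbar2 r1 r2 x2 = - (x2 \<bullet> (r1 - r2)) / rho r1 r2"
definition xbar1b1 :: "real \<Rightarrow> real^3 \<Rightarrow> real^3 \<Rightarrow> real" where
  "xbar1b1 b r1 x1 = (x1 \<bullet> (r1 - rb1 b)) / rho1b1 b r1"
definition xbar2b2 :: "real \<Rightarrow> real^3 \<Rightarrow> real^3 \<Rightarrow> real" where
  "xbar2b2 b r2 x2 = (x2 \<bullet> (r2 - rb2 b)) / rho2b2 b r2"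
definition xtilde :: "real^3 \<Rightarrow> real^3 \<Rightarrow> real" where
  "xtilde x1 x2 = x1 \<bullet> x2"
definition rhat :: "real \<Rightarrow> real^3 \<Rightarrow> real" where
  "rhat b r = r \<bullet> bhat b"
definition xhat :: "real \<Rightarrow> real^3 \<Rightarrow> real" where
  "xhat b x = x \<bullet> bhat b"

definition acc1 :: "real \<Rightarrow> real \<Rightarrow> real \<Rightarrow> real \<Rightarrow> real \<Rightarrow>
    real^3 \<Rightarrow> real^3 \<Rightarrow> real^3 \<Rightarrow> real^3 \<Rightarrow> real^3" where
  "acc1 mu lam a a0 b r1 r2 x1 x2 =
     - (((1 - lam) * mu * (xbar1 r1 r2 x1 - a)) *\<^sub>R
          ((1 / rho r1 r2) *\<^sub>R (r1 - r2) - xbar1 r1 r2 x1 *\<^sub>R x1))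
     - ((lam * mu * (xbar1b1 b r1 x1 - a0)) *\<^sub>R
          ((1 / rho1b1 b r1) *\<^sub>R (r1 - rb1 b) - xbar1b1 b r1 x1 *\<^sub>R x1))"

definition acc2 :: "real \<Rightarrow> real \<Rightarrow> real \<Rightarrow> real \<Rightarrow> real \<Rightarrow>
    real^3 \<Rightarrow> real^3 \<Rightarrow> real^3 \<Rightarrow> real^3 \<Rightarrow> real^3" where
  "acc2 mu lam a a0 b r1 r2 x1 x2 =
     - (((1 - lam) * mu * (xbar2 r1 r2 x2 - a)) *\<^sub>R
          (- ((1 / rho r1 r2) *\<^sub>R (r1 - r2)) - xbar2 r1 r2 x2 *\<^sub>R x2))
     - ((lam * mu * (xbar2b2 b r2 x2 - a0)) *\<^sub>R
          ((1 / rho2b2 b r2) *\<^sub>R (r2 - rb2 b) - xbar2b2 b r2 x2 *\<^sub>R x2))"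

definition shape_vars :: "real \<Rightarrow> real^3 \<Rightarrow> real^3 \<Rightarrow> real^3 \<Rightarrow> real^3 \<Rightarrow> real list" where
  "shape_vars b r1 r2 x1 x2 =
     [xbar1 r1 r2 x1, xbar2 r1 r2 x2, xbar1b1 b r1 x1, xbar2b2 b r2 x2, xtilde x1 x2,
      rho r1 r2, rho1b1 b r1, rho2b2 b r2, rhat b r1, rhat b r2, xhat b x1, xhat b x2]"

text \<open>Time derivative of a shape variable along the flow at a state = derivative at t = 0
 along the line through the state in the direction of the vector field
 (r1', r2', x1', x2') = (x1, x2, acc1, acc2).\<close>
definition circling_equilibrium :: "real \<Rightarrow> real \<Rightarrow> real \<Rightarrow> real \<Rightarrow> real \<Rightarrow>
    real^3 \<Rightarrow> real^3 \<Rightarrow> real^3 \<Rightarrow> real^3 \<Rightarrow> bool" where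
  "circling_equilibrium mu lam a a0 b r1 r2 x1 x2 \<longleftrightarrow>
     norm x1 = 1 \<and> norm x2 = 1 \<and>
     rho r1 r2 > 0 \<and> rho1b1 b r1 > 0 \<and> rho2b2 b r2 > 0 \<and>
     (\<forall>i < length (shape_vars b r1 r2 x1 x2).
        ((\<lambda>t. shape_vars b (r1 + t *\<^sub>R x1) (r2 + t *\<^sub>R x2)
                (x1 + t *\<^sub>R acc1 mu lam a a0 b r1 r2 x1 x2)
                (x2 + t *\<^sub>R acc2 mu lam a a0 b r1 r2 x1 x2) ! i)
          has_real_derivative 0) (at 0))"

end

theory Submission
  imports Defs
begin

text \<open>With the beacon at the origin, a state is a circling equilibrium as soon as the
 agent-to-agent and agent-to-beacon distances are stationary (velocities orthogonal to
 the corresponding relative positions) and the bearings and the relative heading do not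
 rotate, which amounts to five scalar balance equations between the accelerations and the
 velocities.  Both families are then explicit planar-symmetric configurations:
 in (a) the agents sit at antipodal points of a circle of radius R about the beacon and
 move in opposite directions, the balance equation being \<open>\<mu>((1-\<lambda>)a + \<lambda>a\<^sub>0)R = -1\<close>;
 in (b) they sit at heights \<open>\<plusminus>q\<close> on a sphere of radius R and move in parallel, the
 balance equations being \<open>(1-\<lambda>)aR + \<lambda>a\<^sub>0q = 0\<close> and \<open>\<mu>((1-\<lambda>)aq + \<lambda>a\<^sub>0R) = -1\<close>, whose
 solution satisfies \<open>0 < q < R\<close> under the stated sign conditions.\<close>

lemma vector3_inner:
  "vector [a1, a2, a3] \<bullet> (vector [b1, b2, b3] :: real^3) = a1 * b1 + a2 * b2 + a3 * b3"
  by (simp add: inner_vec_def sum_3)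

lemma vector3_norm: "norm (vector [a1, a2, a3] :: real^3) = sqrt (a1\<^sup>2 + a2\<^sup>2 + a3\<^sup>2)"
  by (simp add: norm_eq_sqrt_inner vector3_inner power2_eq_square)

lemma vector3_arith:
  "vector [a1, a2, a3] - (vector [b1, b2, b3] :: real^3) = vector [a1 - b1, a2 - b2, a3 - b3]"
  "vector [a1, a2, a3] + (vector [b1, b2, b3] :: real^3) = vector [a1 + b1, a2 + b2, a3 + b3]"
  "c *\<^sub>R (vector [a1, a2, a3] :: real^3) = vector [c * a1, c * a2, c * a3]"
  "- (vector [a1, a2, a3] :: real^3) = vector [- a1, - a2, - a3]"
  "(vector [a1, a2, a3] :: real^3) = 0 \<longleftrightarrow> a1 = 0 \<and> a2 = 0 \<and> a3 = 0"
  "(vector [a1, a2, a3] :: real^3) = vector [b1, b2, b3] \<longleftrightarrow> a1 = b1 \<and> a2 = b2 \<and> a3 = b3"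
  by (simp_all add: vec_eq_iff forall_3)

lemma beacons_at_origin: "rb1 0 = 0" "rb2 0 = 0" "bhat 0 = 0"
  by (simp_all add: rb1_def rb2_def bhat_def vec_eq_iff forall_3)

lemma has_real_derivative_inner_lines:
  fixes u du v dv :: "'a::real_inner"
  shows "((\<lambda>t. (u + t *\<^sub>R du) \<bullet> (v + t *\<^sub>R dv)) has_real_derivative (du \<bullet> v + u \<bullet> dv)) (at 0)"
proof -
  have "(\<lambda>t. (u + t *\<^sub>R du) \<bullet> (v + t *\<^sub>R dv)) =
        (\<lambda>t. u \<bullet> v + t * (du \<bullet> v + u \<bullet> dv) + t\<^sup>2 * (du \<bullet> dv))"
    by (simp add: fun_eq_iff inner_add_left inner_add_right algebra_simps power2_eq_square)
  then show ?thesis by (auto intro!: derivative_eq_intros)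
qed

lemma has_real_derivative_norm_line:
  fixes u du :: "'a::real_inner"
  assumes "u \<noteq> 0"
  shows "((\<lambda>t. norm (u + t *\<^sub>R du)) has_real_derivative (u \<bullet> du / norm u)) (at 0)"
proof -
  have "0 < u \<bullet> u" using assms by simp
  then have "(sqrt has_real_derivative inverse (sqrt (u \<bullet> u)) / 2)
               (at ((\<lambda>t. (u + t *\<^sub>R du) \<bullet> (u + t *\<^sub>R du)) 0))"
    using DERIV_real_sqrt by simp
  from DERIV_chain2[OF this has_real_derivative_inner_lines]
  have "((\<lambda>t. sqrt ((u + t *\<^sub>R du) \<bullet> (u + t *\<^sub>R du))) has_real_derivative
          inverse (sqrt (u \<bullet> u)) / 2 * (du \<bullet> u + u \<bullet> du)) (at 0)"
    by simp
  then show ?thesis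
    by (simp add: norm_eq_sqrt_inner inner_commute field_simps)
qed

lemma norm_line_stationary:
  fixes u du :: "'a::real_inner"
  assumes "u \<noteq> 0" and "u \<bullet> du = 0"
  shows "((\<lambda>t. norm (u + t *\<^sub>R du)) has_real_derivative 0) (at 0)"
  using has_real_derivative_norm_line[OF assms(1), of du] assms(2) by simp

lemma bearing_line_stationary:
  fixes u du v dv :: "'a::real_inner"
  assumes "v \<noteq> 0" and "u \<bullet> v = 0" and "du \<bullet> v + u \<bullet> dv = 0"
  shows "((\<lambda>t. (u + t *\<^sub>R du) \<bullet> (v + t *\<^sub>R dv) / norm (v + t *\<^sub>R dv)) has_real_derivative 0) (at 0)"
  using DERIV_divide[OF has_real_derivative_inner_lines[of u du v dv]
        has_real_derivative_norm_line[OF assms(1), of dv]] assms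
  by simp

lemma single_beacon_circling_equilibriumI:
  fixes r1 r2 x1 x2 A1 A2 :: "real^3"
  assumes A1: "acc1 mu lam a a0 0 r1 r2 x1 x2 = A1"
    and A2: "acc2 mu lam a a0 0 r1 r2 x1 x2 = A2"
    and unit: "norm x1 = 1" "norm x2 = 1"
    and apart: "r1 \<noteq> r2" and off_beacon: "r1 \<noteq> 0" "r2 \<noteq> 0"
    and orth: "x1 \<bullet> (r1 - r2) = 0" "x2 \<bullet> (r1 - r2) = 0" "x1 \<bullet> r1 = 0" "x2 \<bullet> r2 = 0"
    and balance: "A1 \<bullet> (r1 - r2) + x1 \<bullet> (x1 - x2) = 0"
      "A2 \<bullet> (r1 - r2) + x2 \<bullet> (x1 - x2) = 0"
      "A1 \<bullet> r1 + x1 \<bullet> x1 = 0" "A2 \<bullet> r2 + x2 \<bullet> x2 = 0"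
      "A1 \<bullet> x2 + x1 \<bullet> A2 = 0"
  shows "circling_equilibrium mu lam a a0 0 r1 r2 x1 x2"
proof -
  have sep: "r1 - r2 \<noteq> 0" using apart by simp
  have rel: "\<And>t. (r1 + t *\<^sub>R x1) - (r2 + t *\<^sub>R x2) = (r1 - r2) + t *\<^sub>R (x1 - x2)"
    by (simp add: algebra_simps)
  have "(r1 - r2) \<bullet> (x1 - x2) = 0"
    using orth by (simp add: inner_diff_left inner_diff_right inner_commute)
  then have "((\<lambda>t. rho (r1 + t *\<^sub>R x1) (r2 + t *\<^sub>R x2)) has_real_derivative 0) (at 0)"
    unfolding rho_def rel by (rule norm_line_stationary[OF sep])
  moreover have "((\<lambda>t. rho1b1 0 (r1 + t *\<^sub>R x1)) has_real_derivative 0) (at 0)"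
    unfolding rho1b1_def beacons_at_origin diff_zero
    using off_beacon orth by (simp add: norm_line_stationary inner_commute)
  moreover have "((\<lambda>t. rho2b2 0 (r2 + t *\<^sub>R x2)) has_real_derivative 0) (at 0)"
    unfolding rho2b2_def beacons_at_origin diff_zero
    using off_beacon orth by (simp add: norm_line_stationary inner_commute)
  moreover have "((\<lambda>t. xbar1 (r1 + t *\<^sub>R x1) (r2 + t *\<^sub>R x2) (x1 + t *\<^sub>R A1)) has_real_derivative 0) (at 0)"
    unfolding xbar1_def rho_def rel
    using sep orth balance by (simp add: bearing_line_stationary)
  moreover have "((\<lambda>t. xbar2 (r1 + t *\<^sub>R x1) (r2 + t *\<^sub>R x2) (x2 + t *\<^sub>R A2)) has_real_derivative 0) (at 0)"
    unfolding xbar2_def rho_def rel minus_divide_left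
    using DERIV_minus[OF bearing_line_stationary[OF sep, of x2 A2 "x1 - x2"]] orth balance
    by simp
  moreover have "((\<lambda>t. xbar1b1 0 (r1 + t *\<^sub>R x1) (x1 + t *\<^sub>R A1)) has_real_derivative 0) (at 0)"
    unfolding xbar1b1_def rho1b1_def beacons_at_origin diff_zero
    using off_beacon orth balance by (simp add: bearing_line_stationary)
  moreover have "((\<lambda>t. xbar2b2 0 (r2 + t *\<^sub>R x2) (x2 + t *\<^sub>R A2)) has_real_derivative 0) (at 0)"
    unfolding xbar2b2_def rho2b2_def beacons_at_origin diff_zero
    using off_beacon orth balance by (simp add: bearing_line_stationary)
  moreover have "((\<lambda>t. xtilde (x1 + t *\<^sub>R A1) (x2 + t *\<^sub>R A2)) has_real_derivative 0) (at 0)"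
    unfolding xtilde_def using has_real_derivative_inner_lines[of x1 A1 x2 A2] balance by simp
  ultimately have "\<forall>i < 12. ((\<lambda>t. shape_vars 0 (r1 + t *\<^sub>R x1) (r2 + t *\<^sub>R x2)
                    (x1 + t *\<^sub>R A1) (x2 + t *\<^sub>R A2) ! i) has_real_derivative 0) (at 0)"
    by (simp add: shape_vars_def rhat_def xhat_def beacons_at_origin numeral_eq_Suc less_Suc_eq)
  then show ?thesis
    using unit apart off_beacon
    by (simp add: circling_equilibrium_def A1 A2 shape_vars_def rho_def rho1b1_def rho2b2_def
        beacons_at_origin)
qed


lemma antiparallel_circling_equilibrium:
  assumes R: "R > 0" and balance: "mu * ((1 - lam) * a + lam * a0) * R = -1"
  defines "r1 \<equiv> vector [R, 0, 0] :: real^3" and "r2 \<equiv> vector [- R, 0, 0] :: real^3"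
    and "x1 \<equiv> vector [0, 1, 0] :: real^3" and "x2 \<equiv> vector [0, -1, 0] :: real^3"
  shows "circling_equilibrium mu lam a a0 0 r1 r2 x1 x2 \<and>
    xbar1 r1 r2 x1 = 0 \<and> xbar2 r1 r2 x2 = 0 \<and> xbar1b1 0 r1 x1 = 0 \<and> xbar2b2 0 r2 x2 = 0 \<and>
    xtilde x1 x2 = -1 \<and> rho1b1 0 r1 = R \<and> rho2b2 0 r2 = R \<and> rho r1 r2 = 2 * R"
proof -
  note config = r1_def r2_def x1_def x2_def
  have "sqrt (4 * R\<^sup>2) = 2 * R"
    by (rule real_sqrt_unique) (use R in \<open>auto simp: power2_eq_square\<close>)
  then have dist: "rho r1 r2 = 2 * R" "rho1b1 0 r1 = R" "rho2b2 0 r2 = R"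
    using R by (simp_all add: rho_def rho1b1_def rho2b2_def beacons_at_origin config
        vector3_arith vector3_norm)
  have bearings: "xbar1 r1 r2 x1 = 0" "xbar2 r1 r2 x2 = 0" "xbar1b1 0 r1 x1 = 0"
    "xbar2b2 0 r2 x2 = 0" "xtilde x1 x2 = -1"
    by (simp_all add: xbar1_def xbar2_def xbar1b1_def xbar2b2_def xtilde_def beacons_at_origin
        config vector3_arith vector3_inner)
  have "acc1 mu lam a a0 0 r1 r2 x1 x2 = vector [mu * ((1 - lam) * a + lam * a0), 0, 0]"
    unfolding acc1_def bearings dist
    using R by (simp add: beacons_at_origin config vector3_arith field_simps)
  moreover have "acc2 mu lam a a0 0 r1 r2 x1 x2 = vector [- mu * ((1 - lam) * a + lam * a0), 0, 0]"
    unfolding acc2_def bearings dist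
    using R by (simp add: beacons_at_origin config vector3_arith field_simps)
  ultimately have "circling_equilibrium mu lam a a0 0 r1 r2 x1 x2"
    by (rule single_beacon_circling_equilibriumI)
      (use R balance in \<open>simp_all add: config vector3_arith vector3_inner vector3_norm algebra_simps\<close>)
  with dist bearings show ?thesis by simp
qed


lemma parallel_circling_equilibrium:
  assumes q: "q > 0" and R: "R > 0" and sphere: "p\<^sup>2 + q\<^sup>2 = R\<^sup>2"
    and heading_balance: "(1 - lam) * a * R + lam * a0 * q = 0"
    and radial_balance: "mu * ((1 - lam) * a * q + lam * a0 * R) = -1"
  defines "r1 \<equiv> vector [p, 0, q] :: real^3" and "r2 \<equiv> vector [p, 0, - q] :: real^3"
    and "x \<equiv> vector [0, 1, 0] :: real^3"
  shows "circling_equilibrium mu lam a a0 0 r1 r2 x x \<and>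
    xbar1 r1 r2 x = 0 \<and> xbar2 r1 r2 x = 0 \<and> xbar1b1 0 r1 x = 0 \<and> xbar2b2 0 r2 x = 0 \<and>
    xtilde x x = 1 \<and> rho1b1 0 r1 = R \<and> rho2b2 0 r2 = R \<and> rho r1 r2 = 2 * q"
proof -
  note config = r1_def r2_def x_def
  have "sqrt (4 * q\<^sup>2) = 2 * q"
    by (rule real_sqrt_unique) (use q in \<open>auto simp: power2_eq_square\<close>)
  then have dist: "rho r1 r2 = 2 * q" "rho1b1 0 r1 = R" "rho2b2 0 r2 = R"
    using R by (simp_all add: rho_def rho1b1_def rho2b2_def beacons_at_origin config
        vector3_arith vector3_norm sphere)
  have bearings: "xbar1 r1 r2 x = 0" "xbar2 r1 r2 x = 0" "xbar1b1 0 r1 x = 0"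
    "xbar2b2 0 r2 x = 0" "xtilde x x = 1"
    by (simp_all add: xbar1_def xbar2_def xbar1b1_def xbar2b2_def xtilde_def beacons_at_origin
        config vector3_arith vector3_inner)
  have vertical: "(1 - lam) * mu * a + lam * mu * a0 * q / R = 0"
  proof -
    have "(1 - lam) * mu * a + lam * mu * a0 * q / R = mu * ((1 - lam) * a * R + lam * a0 * q) / R"
      using R by (simp add: field_simps)
    with heading_balance show ?thesis by simp
  qed
  have acc1: "acc1 mu lam a a0 0 r1 r2 x x =
      vector [lam * mu * a0 * p / R, 0, (1 - lam) * mu * a + lam * mu * a0 * q / R]"
    unfolding acc1_def bearings dist
    using R q by (simp add: beacons_at_origin config vector3_arith field_simps)
  have acc2: "acc2 mu lam a a0 0 r1 r2 x x =
      vector [lam * mu * a0 * p / R, 0, - ((1 - lam) * mu * a + lam * mu * a0 * q / R)]"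
    unfolding acc2_def bearings dist
    using R q by (simp add: beacons_at_origin config vector3_arith field_simps)
  have radial: "lam * mu * a0 * p / R * p = -1"
  proof -
    have vertical_alt: "lam * mu * a0 * q / R = - ((1 - lam) * mu * a)"
      using vertical by linarith
    have "lam * mu * a0 * p / R * p = lam * mu * a0 * (R\<^sup>2 - q\<^sup>2) / R"
      using sphere by (simp add: power2_eq_square flip: sphere)
    also have "\<dots> = lam * mu * a0 * R - (lam * mu * a0 * q / R) * q"
      using R by (simp add: field_simps power2_eq_square)
    also have "\<dots> = mu * ((1 - lam) * a * q + lam * a0 * R)"
      unfolding vertical_alt by (simp add: algebra_simps)
    finally show ?thesis using radial_balance by simp
  qed
  have "circling_equilibrium mu lam a a0 0 r1 r2 x x"
    by (rule single_beacon_circling_equilibriumI[OF acc1[unfolded vertical] acc2[unfolded vertical]])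
      (use q radial radial_balance in \<open>simp_all add: config vector3_arith vector3_inner vector3_norm algebra_simps\<close>)
  with dist bearings show ?thesis by simp
qed


lemma parallel_equilibrium_parameters:
  fixes mu lam a a0 :: real
  assumes mu: "mu > 0" and lam: "0 < lam" "lam < 1"
    and s: "(1 - lam) * a + lam * a0 < 0" and a0: "a0 < 0" and a: "a > 0"
  defines "D \<equiv> (1 - lam)\<^sup>2 * a\<^sup>2 - lam\<^sup>2 * a0\<^sup>2"
  defines "R \<equiv> lam * a0 / (mu * D)" and "q \<equiv> - (1 - lam) * a / (mu * D)"
  shows "0 < q" "q < R" "(1 - lam) * a * R + lam * a0 * q = 0"
    "mu * ((1 - lam) * a * q + lam * a0 * R) = -1"
proof -
  have "0 < (1 - lam) * a" "(1 - lam) * a < - (lam * a0)"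
    using lam a s by simp_all
  then have "((1 - lam) * a)\<^sup>2 < (- (lam * a0))\<^sup>2"
    by (intro power_strict_mono) simp_all
  then have muD: "mu * D < 0"
    using mu by (simp add: D_def power_mult_distrib mult_pos_neg)
  have "- (1 - lam) * a < 0"
    using lam a by (simp add: mult_neg_pos)
  from divide_neg_neg[OF this muD] show "0 < q"
    unfolding q_def .
  have "R - q = ((1 - lam) * a + lam * a0) / (mu * D)"
    unfolding R_def q_def by (simp add: diff_divide_distrib[symmetric] algebra_simps)
  also have "\<dots> > 0"
    using divide_neg_neg[OF s muD] .
  finally show "q < R" by simp
  show "(1 - lam) * a * R + lam * a0 * q = 0"
    unfolding R_def q_def by (simp add: add_divide_distrib[symmetric] algebra_simps)
  have "mu * ((1 - lam) * a * q + lam * a0 * R) =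
      mu * (lam\<^sup>2 * a0\<^sup>2 - (1 - lam)\<^sup>2 * a\<^sup>2) / (mu * D)"
    unfolding R_def q_def by (simp add: add_divide_distrib[symmetric] algebra_simps power2_eq_square)
  also have "\<dots> = - (mu * D) / (mu * D)"
    by (simp add: D_def algebra_simps)
  also have "\<dots> = -1"
    using muD by force
  finally show "mu * ((1 - lam) * a * q + lam * a0 * R) = -1" .
qed

lemma antiparallel_equilibrium_exists:
  assumes mu: "mu > 0" and s: "(1 - lam) * a + lam * a0 < 0"
  shows "\<exists>r1 r2 x1 x2 :: real^3.
         circling_equilibrium mu lam a a0 0 r1 r2 x1 x2 \<and>
         xbar1 r1 r2 x1 = 0 \<and> xbar2 r1 r2 x2 = 0 \<and>
         xbar1b1 0 r1 x1 = 0 \<and> xbar2b2 0 r2 x2 = 0 \<and>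
         xtilde x1 x2 = -1 \<and>
         rho1b1 0 r1 = 1 / (- mu * ((1 - lam) * a + lam * a0)) \<and>
         rho2b2 0 r2 = 1 / (- mu * ((1 - lam) * a + lam * a0)) \<and>
         rho r1 r2 = 2 * rho1b1 0 r1"
proof -
  define R where "R = 1 / (- mu * ((1 - lam) * a + lam * a0))"
  have "R > 0" "mu * ((1 - lam) * a + lam * a0) * R = -1"
    using mu s by (simp_all add: R_def mult_pos_neg)
  from antiparallel_circling_equilibrium[OF this] show ?thesis
    unfolding R_def by metis
qed

lemma parallel_equilibrium_exists:
  assumes "mu > 0" and "0 < lam" "lam < 1"
    and "(1 - lam) * a + lam * a0 < 0" and "a0 < 0" and "a > 0"
  shows "\<exists>r1 r2 x1 x2 :: real^3.
         circling_equilibrium mu lam a a0 0 r1 r2 x1 x2 \<and>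
         xbar1 r1 r2 x1 = 0 \<and> xbar2 r1 r2 x2 = 0 \<and>
         xbar1b1 0 r1 x1 = 0 \<and> xbar2b2 0 r2 x2 = 0 \<and>
         xtilde x1 x2 = 1 \<and>
         rho1b1 0 r1 = lam * a0 / (mu * ((1 - lam)^2 * a^2 - lam^2 * a0^2)) \<and>
         rho2b2 0 r2 = lam * a0 / (mu * ((1 - lam)^2 * a^2 - lam^2 * a0^2)) \<and>
         rho r1 r2 = -2 * (1 - lam) * a / (mu * ((1 - lam)^2 * a^2 - lam^2 * a0^2))"
proof -
  define R where "R = lam * a0 / (mu * ((1 - lam)^2 * a^2 - lam^2 * a0^2))"
  define q where "q = - (1 - lam) * a / (mu * ((1 - lam)^2 * a^2 - lam^2 * a0^2))"
  note parameters = parallel_equilibrium_parameters[OF assms, folded R_def q_def]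
  have "sqrt (R\<^sup>2 - q\<^sup>2) ^ 2 + q\<^sup>2 = R\<^sup>2"
    using parameters(1,2) by (simp add: power_strict_mono)
  from parallel_circling_equilibrium[OF parameters(1) _ this parameters(3,4)] parameters(1,2)
  have "\<exists>r1 r2 x :: real^3. circling_equilibrium mu lam a a0 0 r1 r2 x x \<and>
    xbar1 r1 r2 x = 0 \<and> xbar2 r1 r2 x = 0 \<and> xbar1b1 0 r1 x = 0 \<and> xbar2b2 0 r2 x = 0 \<and>
    xtilde x x = 1 \<and> rho1b1 0 r1 = R \<and> rho2b2 0 r2 = R \<and> rho r1 r2 = 2 * q"
    by auto
  moreover have "2 * q = -2 * (1 - lam) * a / (mu * ((1 - lam)^2 * a^2 - lam^2 * a0^2))"
    by (simp add: q_def)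
  ultimately show ?thesis
    unfolding R_def by metis
qed

theorem proposition4p2:
  fixes mu lam a a0 :: real
  assumes "mu > 0" and "0 < lam" and "lam < 1"
    and "-1 \<le> a" and "a \<le> 1"
    and "-1 \<le> a0" and "a0 \<le> 1" and "a0 \<noteq> 0"
  shows
   "((1 - lam) * a + lam * a0 < 0 \<longrightarrow>
      (\<exists>r1 r2 x1 x2 :: real^3.
         circling_equilibrium mu lam a a0 0 r1 r2 x1 x2 \<and>
         xbar1 r1 r2 x1 = 0 \<and> xbar2 r1 r2 x2 = 0 \<and>
         xbar1b1 0 r1 x1 = 0 \<and> xbar2b2 0 r2 x2 = 0 \<and>
         xtilde x1 x2 = -1 \<and>
         rho1b1 0 r1 = 1 / (- mu * ((1 - lam) * a + lam * a0)) \<and>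
         rho2b2 0 r2 = 1 / (- mu * ((1 - lam) * a + lam * a0)) \<and>
         rho r1 r2 = 2 * rho1b1 0 r1))
    \<and>
    ((1 - lam) * a + lam * a0 < 0 \<and> a0 < 0 \<and> a > 0 \<longrightarrow>
      (\<exists>r1 r2 x1 x2 :: real^3.
         circling_equilibrium mu lam a a0 0 r1 r2 x1 x2 \<and>
         xbar1 r1 r2 x1 = 0 \<and> xbar2 r1 r2 x2 = 0 \<and>
         xbar1b1 0 r1 x1 = 0 \<and> xbar2b2 0 r2 x2 = 0 \<and>
         xtilde x1 x2 = 1 \<and>
         rho1b1 0 r1 = lam * a0 / (mu * ((1 - lam)^2 * a^2 - lam^2 * a0^2)) \<and>
         rho2b2 0 r2 = lam * a0 / (mu * ((1 - lam)^2 * a^2 - lam^2 * a0^2)) \<and>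
         rho r1 r2 = -2 * (1 - lam) * a / (mu * ((1 - lam)^2 * a^2 - lam^2 * a0^2))))"
  using antiparallel_equilibrium_exists[OF assms(1)]
    parallel_equilibrium_exists[OF assms(1-3)]
  by blast

end
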